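(* Let $b\in H^\infty(\mathbb{D})$ with $\|b\|_\infty=1$. Then $|b'(r\xi)|\le 4|b'(\xi)|$ for every $\xi\in\partial\mathbb{D}\setminus\overline{\mathrm{spec}(b)}$ and every $1/2<r<1$.
   Context: $\mathbb{D}$ is the open unit disc, $H^\infty(\mathbb{D})$ the bounded analytic functions, $\|b\|_\infty=\sup_{\mathbb{D}}|b|$. For $b\in H^\infty(\mathbb{D})$ with $\|b\|_\infty=1$, $\mathrm{spec}(b)=\{\xi\in\partial\mathbb{D}: \liminf_{z\to\xi, z\in\mathbb{D}}|b(z)|<1\}$. The function $b$ extends analytically across each arc of the open set $\partial\mathbb{D}\setminus\overline{\mathrm{spec}(b)}$, with $|b|=1$ there; $b'(\xi)$ for such $\xi$ denotes the derivative of this extension. *)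

theory Defs
  imports "HOL-Analysis.Analysis"
begin

definition Hinf_unit :: "(complex \<Rightarrow> complex) \<Rightarrow> bool" where
  "Hinf_unit b \<longleftrightarrow> b holomorphic_on ball 0 1 \<and> bounded (b ` ball 0 1)
      \<and> (SUP z\<in>ball 0 1. norm (b z)) = 1"

definition spec :: "(complex \<Rightarrow> complex) \<Rightarrow> complex set" where
  "spec b = {\<xi> \<in> sphere 0 1.
      Liminf (at \<xi> within ball 0 1) (\<lambda>z. ereal (norm (b z))) < 1}"

text \<open>Derivative at a boundary point of the analytic continuation of b across the boundary:
  the derivative at xi of a function holomorphic on a neighbourhood ball of xi that
  agrees with b on the part of that ball inside the disc.\<close>
definition bdry_deriv :: "(complex \<Rightarrow> complex) \<Rightarrow> complex \<Rightarrow> complex" where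
  "bdry_deriv b \<xi> = (SOME d. \<exists>e>0. \<exists>g. g holomorphic_on ball \<xi> e
       \<and> (\<forall>z\<in>ball \<xi> e \<inter> ball 0 1. g z = b z) \<and> d = deriv g \<xi>)"

end

theory Submission
  imports Defs "HOL-Complex_Analysis.Complex_Analysis"
begin

text \<open>If \<open>b\<close> maps the disc into itself and \<open>a = b(r\<xi>)\<close>, Schwarz--Pick at \<open>r\<xi>\<close> and \<open>t\<xi>\<close>
  with \<open>t \<rightarrow> 1\<close> gives the Julia-type inequality
  \<open>(1 - r\<^sup>2)(1 - |a|)\<^sup>2 \<le> (1 - |a|\<^sup>2) |b'(\<xi>)| (1 - r)\<^sup>2\<close>, and together with
  \<open>|b'(r\<xi>)| (1 - r\<^sup>2) \<le> 1 - |a|\<^sup>2\<close> this yields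
  \<open>|b'(r\<xi>)| \<le> (1 + |a|)\<^sup>2 / (1 + r)\<^sup>2 |b'(\<xi>)| \<le> 4 |b'(\<xi>)|\<close>.

  The analytic continuation across an arc off the spectrum has to be constructed. Near such
  an arc \<open>|b| \<rightarrow> 1\<close>, so \<open>b\<close> has no zeros there. On a small disc orthogonal to the unit circle,
  take the Schwarz integral \<open>S\<close> of the boundary data \<open>-ln |b|\<close>, made odd under inversion
  in the unit circle. Comparing \<open>S\<close> with its reflection shows \<open>Re S = 0\<close> on the unit
  circle, so \<open>|exp S \<cdot> b| \<rightarrow> 1\<close> at the whole boundary of the part of the small disc inside
  the unit disc; by the maximum principle \<open>exp S \<cdot> b\<close> is constant, and \<open>b = k exp (-S)\<close>
  continues holomorphically.\<close>

lemma norm_one_minus_cnj_mult_gt_0: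
  fixes a z :: complex
  assumes "norm a < 1" "norm z < 1"
  shows "0 < norm (1 - cnj a * z)"
proof -
  have "norm (cnj a * z) < 1"
    using assms mult_strict_mono[of "norm a" 1 "norm z" 1] by (simp add: norm_mult)
  then have "1 - cnj a * z \<noteq> 0" by auto
  then show ?thesis by simp
qed

lemma norm_one_minus_cnj_self:
  fixes a :: complex
  assumes "norm a \<le> 1"
  shows "norm (1 - cnj a * a) = 1 - (norm a)^2"
proof -
  have "cnj a * a = of_real ((norm a)^2)" by (metis complex_norm_square mult.commute)
  then have "norm (1 - cnj a * a) = \<bar>1 - (norm a)^2\<bar>"
    by (metis norm_of_real of_real_1 of_real_diff)
  then show ?thesis using assms power_le_one[of "norm a" 2] by simp
qed

lemma norm_one_minus_cnj_mult_sq_diff: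
  fixes a z :: complex
  shows "(norm (1 - cnj a * z))^2 - (norm (a - z))^2 = (1 - (norm a)^2) * (1 - (norm z)^2)"
  unfolding cmod_power2 by (simp add: algebra_simps power2_eq_square)

lemma Schwarz_Pick:
  assumes hol: "f holomorphic_on ball 0 1" and lt: "\<forall>z\<in>ball 0 1. norm (f z) < 1"
    and z: "z \<in> ball 0 1" and w: "w \<in> ball 0 1"
  shows "norm (f z - f w) * norm (1 - cnj w * z) \<le> norm (z - w) * norm (1 - cnj (f w) * f z)"
proof -
  have wn: "norm (-w) < 1" and fw: "norm (f w) < 1" and zn: "norm z < 1"
    using w z lt by auto
  define h where "h = Moebius_function 0 (f w) \<circ> (f \<circ> Moebius_function 0 (-w))"
  have into: "Moebius_function 0 (-w) ` ball 0 1 \<subseteq> ball 0 1" "f ` ball 0 1 \<subseteq> ball 0 1"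
    using Moebius_function_norm_lt_1[OF wn] lt by auto
  have "(f \<circ> Moebius_function 0 (-w)) holomorphic_on ball 0 1"
    by (rule holomorphic_on_compose_gen[OF Moebius_function_holomorphic[OF wn] hol into(1)])
  then have "h holomorphic_on ball 0 1"
    unfolding h_def using into
    by (intro holomorphic_on_compose_gen[OF _ Moebius_function_holomorphic[OF fw]])
      (auto simp: image_subset_iff)
  moreover have "h 0 = 0" by (simp add: h_def Moebius_function_def)
  moreover have "norm (h u) < 1" if "norm u < 1" for u
    using Moebius_function_norm_lt_1[OF fw] Moebius_function_norm_lt_1[OF wn that] lt
    by (simp add: h_def)
  moreover have "norm (Moebius_function 0 w z) < 1"
    using Moebius_function_norm_lt_1 w zn by simp
  ultimately have "norm (h (Moebius_function 0 w z)) \<le> norm (Moebius_function 0 w z)"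
    using Schwarz_Lemma(1) by auto
  moreover have "Moebius_function 0 (-w) (Moebius_function 0 w z) = z"
    by (rule Moebius_function_compose) (use w zn in auto)
  ultimately have "norm ((f z - f w) / (1 - cnj (f w) * f z)) \<le> norm ((z - w) / (1 - cnj w * z))"
    by (simp add: h_def Moebius_function_def)
  moreover have "0 < norm (1 - cnj (f w) * f z)" "0 < norm (1 - cnj w * z)"
    using norm_one_minus_cnj_mult_gt_0 fw zn lt z w by auto
  ultimately show ?thesis
    by (simp add: norm_divide divide_simps mult.commute)
qed

lemma Schwarz_Pick_squared:
  assumes hol: "f holomorphic_on ball 0 1" and lt: "\<forall>z\<in>ball 0 1. norm (f z) < 1"
    and z: "z \<in> ball 0 1" and w: "w \<in> ball 0 1"
  shows "(1 - (norm z)^2) * (1 - (norm w)^2) * (norm (1 - cnj (f w) * f z))^2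
     \<le> (1 - (norm (f z))^2) * (1 - (norm (f w))^2) * (norm (1 - cnj w * z))^2"
proof -
  define A B P Q X Y where "A = (norm (f w - f z))^2" and "B = (norm (w - z))^2"
    and "P = (norm (1 - cnj (f w) * f z))^2" and "Q = (norm (1 - cnj w * z))^2"
    and "X = (1 - (norm (f w))^2) * (1 - (norm (f z))^2)"
    and "Y = (1 - (norm w)^2) * (1 - (norm z)^2)"
  have "(norm (f z - f w) * norm (1 - cnj w * z))^2 \<le> (norm (z - w) * norm (1 - cnj (f w) * f z))^2"
    using Schwarz_Pick[OF hol lt z w] by (simp add: power_mono)
  then have "A * Q \<le> B * P"
    by (simp add: A_def B_def P_def Q_def power_mult_distrib norm_minus_commute)
  moreover have "P = X + A" "Q = Y + B"
    using norm_one_minus_cnj_mult_sq_diff[of "f w" "f z"] norm_one_minus_cnj_mult_sq_diff[of w z]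
    by (simp_all add: A_def B_def P_def Q_def X_def Y_def)
  ultimately have "Y * P \<le> X * Q" by (simp add: algebra_simps)
  then show ?thesis by (simp add: P_def Q_def X_def Y_def algebra_simps)
qed

lemma Schwarz_Pick_deriv:
  assumes hol: "f holomorphic_on ball 0 1" and lt: "\<forall>z\<in>ball 0 1. norm (f z) < 1"
    and z: "z \<in> ball 0 1"
  shows "norm (deriv f z) * (1 - (norm z)^2) \<le> 1 - (norm (f z))^2"
proof -
  have zn: "norm z < 1" and fz: "norm (f z) < 1" using lt z by auto
  have "(f has_field_derivative deriv f z) (at z)"
    using holomorphic_derivI[OF hol open_ball z] by simp
  then have diff_quot: "((\<lambda>w. norm ((f w - f z) / (w - z))) \<longlongrightarrow> norm (deriv f z)) (at z)"
    by (intro tendsto_norm) (simp add: has_field_derivative_iff)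
  have "isCont f z"
    using holomorphic_on_imp_continuous_on[OF hol] z continuous_on_interior by fastforce
  moreover have "norm (1 - cnj z * z) \<noteq> 0"
    using norm_one_minus_cnj_mult_gt_0[OF zn zn] by simp
  ultimately have pick_quot: "((\<lambda>w. norm (1 - cnj (f z) * f w) / norm (1 - cnj z * w)) \<longlongrightarrow>
        norm (1 - cnj (f z) * f z) / norm (1 - cnj z * z)) (at z)"
    by (intro tendsto_intros isCont_tendsto_compose[OF \<open>isCont f z\<close>])
  have "eventually (\<lambda>w. w \<in> ball 0 1 \<and> w \<noteq> z) (at z)"
    using z by (intro eventually_conj eventually_at_in_open') (auto simp: eventually_at_filter)
  then have "eventually (\<lambda>w. norm ((f w - f z) / (w - z))
      \<le> norm (1 - cnj (f z) * f w) / norm (1 - cnj z * w)) (at z)"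
  proof eventually_elim
    case (elim w)
    then have "0 < norm (1 - cnj z * w)" "0 < norm (w - z)"
      using norm_one_minus_cnj_mult_gt_0[OF zn] by auto
    with Schwarz_Pick[OF hol lt _ z, of w] elim show ?case
      by (simp add: norm_divide divide_simps mult.commute)
  qed
  then have "norm (deriv f z) \<le> norm (1 - cnj (f z) * f z) / norm (1 - cnj z * z)"
    by (rule tendsto_le[OF _ pick_quot diff_quot, rotated]) simp
  also have "\<dots> = (1 - (norm (f z))^2) / (1 - (norm z)^2)"
    using norm_one_minus_cnj_self zn fz by simp
  finally show ?thesis
    using zn abs_square_less_1[of "norm z"] by (simp add: divide_simps)
qed

lemma Schwarz_Pick_unimodular:
  assumes hol: "f holomorphic_on ball 0 1" and lt: "\<forall>z\<in>ball 0 1. norm (f z) < 1"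
    and z: "z \<in> ball 0 1" and w: "w \<in> ball 0 1" and c: "norm c = 1"
  shows "(1 - (norm z)^2) * (1 - (norm w)^2) * (norm (1 - cnj (f w) * f z))^2
     \<le> (1 - (norm (f z))^2) * (2 * norm (c - f w)) * (norm (1 - cnj w * z))^2"
proof -
  have fw: "norm (f w) < 1" and fz: "norm (f z) < 1" using lt w z by auto
  have "1 - (norm (f w))^2 = (1 - norm (f w)) * (1 + norm (f w))"
    by (simp add: power2_eq_square algebra_simps)
  also have "\<dots> \<le> norm (c - f w) * 2"
    using fw c norm_triangle_ineq2[of c "f w"] by (intro mult_mono) auto
  finally have "1 - (norm (f w))^2 \<le> 2 * norm (c - f w)" by simp
  moreover have "0 \<le> 1 - (norm (f z))^2"
    using fz abs_square_less_1[of "norm (f z)"] by simp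
  ultimately show ?thesis
    using Schwarz_Pick_squared[OF hol lt z w]
    by (smt (verit, best) mult_right_mono mult_left_mono zero_le_power2)
qed

lemma Schwarz_Pick_radial:
  assumes hol: "f holomorphic_on ball 0 1" and lt: "\<forall>z\<in>ball 0 1. norm (f z) < 1"
    and \<xi>: "norm \<xi> = 1" and c: "norm c = 1" and r: "0 \<le> r" "r < 1" and t: "0 < t" "t < 1"
  shows "(1 - r^2) * (1 + t) * (norm (1 - cnj (f (of_real t * \<xi>)) * f (of_real r * \<xi>)))^2
    \<le> (1 - (norm (f (of_real r * \<xi>)))^2) * 2 * (norm (c - f (of_real t * \<xi>)) / (1 - t))
        * (1 - t * r)^2"
proof -
  define z where "z = of_real r * \<xi>"
  define w where "w = of_real t * \<xi>"
  have nz: "norm z = r" and nw: "norm w = t" using \<xi> r t by (simp_all add: z_def w_def norm_mult)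
  then have z: "z \<in> ball 0 1" and w: "w \<in> ball 0 1" using r t by simp_all
  have "cnj w * z = of_real (t * r) * (cnj \<xi> * \<xi>)" by (simp add: w_def z_def algebra_simps)
  also have "cnj \<xi> * \<xi> = 1" using \<xi> by (metis complex_norm_square mult.commute of_real_1 power_one)
  finally have "1 - cnj w * z = of_real (1 - t * r)" by simp
  then have n1: "norm (1 - cnj w * z) = 1 - t * r"
    using t r mult_strict_mono[of t 1 r 1] by (simp only: norm_of_real) simp
  have "((1 - r^2) * (1 + t) * (norm (1 - cnj (f w) * f z))^2) * (1 - t)
      = (1 - r^2) * (1 - t^2) * (norm (1 - cnj (f w) * f z))^2"
    by (simp add: power2_eq_square algebra_simps)
  also have "\<dots> \<le> (1 - (norm (f z))^2) * (2 * norm (c - f w)) * (1 - t * r)^2"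
    using Schwarz_Pick_unimodular[OF hol lt z w c] by (simp only: n1 nz nw)
  also have "\<dots> = ((1 - (norm (f z))^2) * 2 * (norm (c - f w) / (1 - t)) * (1 - t * r)^2) * (1 - t)"
    using t by (simp add: field_simps)
  finally show ?thesis
    unfolding z_def w_def by (rule mult_right_le_imp_le) (use t in simp)
qed

lemma tendsto_radial_difference_quotient:
  assumes \<xi>: "norm \<xi> = 1" and e: "0 < e" and holg: "g holomorphic_on ball \<xi> e"
  shows "((\<lambda>t. norm (g \<xi> - g (of_real t * \<xi>)) / (1 - t)) \<longlongrightarrow> norm (deriv g \<xi>)) (at_left 1)"
proof -
  define w where "w = (\<lambda>t::real. of_real t * \<xi>)"
  have "(w \<longlongrightarrow> \<xi>) (at_left 1)"
    unfolding w_def by (auto intro!: tendsto_eq_intros)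
  moreover have "eventually (\<lambda>t. w t \<noteq> \<xi>) (at_left (1::real))"
    using \<xi> by (auto simp: w_def eventually_at_filter intro!: always_eventually)
  ultimately have "filterlim w (at \<xi>) (at_left 1)" by (rule filterlim_atI)
  moreover have "((\<lambda>y. (g y - g \<xi>) / (y - \<xi>)) \<longlongrightarrow> deriv g \<xi>) (at \<xi>)"
    using holomorphic_derivI[OF holg open_ball] e by (simp add: has_field_derivative_iff)
  ultimately have "((\<lambda>t. norm ((g (w t) - g \<xi>) / (w t - \<xi>))) \<longlongrightarrow> norm (deriv g \<xi>)) (at_left 1)"
    by (intro tendsto_norm) (rule filterlim_compose)
  moreover have "norm ((g (w t) - g \<xi>) / (w t - \<xi>)) = norm (g \<xi> - g (w t)) / (1 - t)"
    if "t < 1" for t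
  proof -
    have "\<xi> - w t = of_real (1 - t) * \<xi>" by (simp add: w_def algebra_simps)
    then have "norm (w t - \<xi>) = 1 - t"
      using that \<xi> by (simp add: norm_mult norm_minus_commute del: of_real_diff)
    then show ?thesis by (simp add: norm_divide norm_minus_commute)
  qed
  moreover have "eventually (\<lambda>t. t < 1) (at_left (1::real))"
    by (auto simp: eventually_at_filter intro!: always_eventually)
  ultimately show ?thesis
    unfolding w_def by (auto elim!: Lim_transform_eventually eventually_mono)
qed

text \<open>Let \<open>t \<rightarrow> 1\<close> in the previous estimate with \<open>c = g \<xi>\<close>.\<close>
lemma radial_Julia_estimate:
  assumes hol: "f holomorphic_on ball 0 1" and lt: "\<forall>z\<in>ball 0 1. norm (f z) < 1"
    and \<xi>: "norm \<xi> = 1" and e: "e > 0" and holg: "g holomorphic_on ball \<xi> e"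
    and gf: "\<forall>z\<in>ball \<xi> e \<inter> ball 0 1. g z = f z" and g\<xi>: "norm (g \<xi>) = 1"
    and r: "0 \<le> r" "r < 1"
  shows "(1 - r^2) * (norm (1 - cnj (g \<xi>) * f (of_real r * \<xi>)))^2
    \<le> (1 - (norm (f (of_real r * \<xi>)))^2) * norm (deriv g \<xi>) * (1 - r)^2"
proof -
  define a where "a = f (of_real r * \<xi>)"
  define Q where "Q = (\<lambda>t. norm (g \<xi> - g (of_real t * \<xi>)) / (1 - t))"
  have "eventually (\<lambda>t. 0 < t \<and> t < 1 \<and> g (of_real t * \<xi>) = f (of_real t * \<xi>)) (at_left 1)"
  proof -
    have "eventually (\<lambda>t. t \<in> {max 0 (1 - e)<..<1}) (at_left (1::real))"
      by (rule eventually_at_left_real) (use e in auto)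
    moreover have "of_real t * \<xi> \<in> ball \<xi> e \<inter> ball 0 1" if "t \<in> {max 0 (1 - e)<..<1}" for t
    proof -
      have "\<xi> - of_real t * \<xi> = of_real (1 - t) * \<xi>" by (simp add: algebra_simps)
      then show ?thesis using that \<xi> by (simp add: dist_norm norm_mult del: of_real_diff)
    qed
    ultimately show ?thesis using gf by (auto elim!: eventually_mono)
  qed
  then have "eventually (\<lambda>t. (1 - r^2) * (1 + t) * (norm (1 - cnj (g (of_real t * \<xi>)) * a))^2
      \<le> (1 - (norm a)^2) * 2 * Q t * (1 - t * r)^2) (at_left 1)"
    by eventually_elim (use Schwarz_Pick_radial[OF hol lt \<xi> g\<xi> r] in \<open>auto simp: Q_def a_def\<close>)
  moreover have "((\<lambda>t. (1 - r^2) * (1 + t) * (norm (1 - cnj (g (of_real t * \<xi>)) * a))^2)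
      \<longlongrightarrow> (1 - r^2) * (1 + 1) * (norm (1 - cnj (g \<xi>) * a))^2) (at_left 1)"
  proof -
    have "isCont g \<xi>"
      using holomorphic_on_imp_continuous_on[OF holg] e continuous_on_interior by fastforce
    moreover have "((\<lambda>t. of_real t * \<xi>) \<longlongrightarrow> \<xi>) (at_left 1)" by (auto intro!: tendsto_eq_intros)
    ultimately have "((\<lambda>t. g (of_real t * \<xi>)) \<longlongrightarrow> g \<xi>) (at_left 1)"
      by (rule isCont_tendsto_compose)
    then show ?thesis by (intro tendsto_intros)
  qed
  moreover have "((\<lambda>t. (1 - (norm a)^2) * 2 * Q t * (1 - t * r)^2)
      \<longlongrightarrow> (1 - (norm a)^2) * 2 * norm (deriv g \<xi>) * (1 - 1 * r)^2) (at_left 1)"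
    unfolding Q_def using tendsto_radial_difference_quotient[OF \<xi> e holg] by (intro tendsto_intros)
  ultimately have "(1 - r^2) * (1 + 1) * (norm (1 - cnj (g \<xi>) * a))^2
      \<le> (1 - (norm a)^2) * 2 * norm (deriv g \<xi>) * (1 - 1 * r)^2"
    by (intro tendsto_le[OF trivial_limit_at_left_real])
  then show ?thesis by (simp add: a_def algebra_simps)
qed

lemma real_bound_from_Julia_estimate:
  fixes d a \<beta> r :: real
  assumes "0 \<le> d" "0 \<le> a" "a < 1" "0 \<le> r" "r < 1" "0 \<le> \<beta>"
    and julia: "(1 - r^2) * (1 - a)^2 \<le> (1 - a^2) * \<beta> * (1 - r)^2"
    and pick: "d * (1 - r^2) \<le> 1 - a^2"
  shows "d \<le> 4 * \<beta>"
proof -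
  have p: "0 < 1 - r" "0 < 1 - a" using assms by auto
  have "((1 + r) * (1 - a)) * ((1 - r) * (1 - a)) \<le> ((1 + a) * \<beta> * (1 - r)) * ((1 - r) * (1 - a))"
    using julia by (simp add: power2_eq_square algebra_simps)
  then have k1: "(1 + r) * (1 - a) \<le> (1 + a) * \<beta> * (1 - r)"
    using p by (simp add: mult_le_cancel_right_pos)
  have "(d * (1 + r) * (1 + r)) * (1 - r) = (d * (1 - r^2)) * (1 + r)"
    by (simp add: power2_eq_square algebra_simps)
  also have "\<dots> \<le> (1 - a^2) * (1 + r)" using pick assms by (intro mult_right_mono) auto
  also have "\<dots> = ((1 + r) * (1 - a)) * (1 + a)" by (simp add: power2_eq_square algebra_simps)
  also have "\<dots> \<le> ((1 + a) * \<beta> * (1 - r)) * (1 + a)" using k1 assms by (intro mult_right_mono) auto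
  finally have "d * (1 + r) * (1 + r) \<le> (1 + a) * (1 + a) * \<beta>"
    using p by (simp add: mult.commute mult.left_commute mult_le_cancel_left_pos)
  moreover have "d \<le> d * (1 + r) * (1 + r)"
    using assms by (simp add: algebra_simps)
  moreover have "(1 + a) * (1 + a) * \<beta> \<le> 4 * \<beta>"
    using assms mult_mono[of "1 + a" 2 "1 + a" 2] by (intro mult_right_mono) auto
  ultimately show ?thesis by linarith
qed

lemma tendsto_norm_1_off_spec:
  assumes "\<eta> \<in> sphere 0 1" "\<eta> \<notin> spec f" "\<forall>z\<in>ball 0 1. norm (f z) \<le> 1"
  shows "((\<lambda>z. norm (f z)) \<longlongrightarrow> 1) (at \<eta> within ball 0 1)"
proof (rule order_tendstoI)
  fix a :: real assume "a < 1"
  have "1 \<le> Liminf (at \<eta> within ball 0 1) (\<lambda>z. ereal (norm (f z)))"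
    using assms(1,2) unfolding spec_def by (simp add: not_less)
  then have "\<forall>y<1. eventually (\<lambda>z. y < ereal (norm (f z))) (at \<eta> within ball 0 1)"
    by (simp add: le_Liminf_iff)
  from this[rule_format, of "ereal a"]
  show "eventually (\<lambda>z. a < norm (f z)) (at \<eta> within ball 0 1)" using \<open>a < 1\<close> by simp
next
  fix a :: real assume "1 < a"
  then show "eventually (\<lambda>z. norm (f z) < a) (at \<eta> within ball 0 1)"
    using assms(3) by (auto simp: eventually_at_filter intro!: always_eventually)
      (metis dual_order.strict_trans2 mem_ball_0)
qed

definition local_continuation ::
    "(complex \<Rightarrow> complex) \<Rightarrow> complex \<Rightarrow> real \<Rightarrow> (complex \<Rightarrow> complex) \<Rightarrow> bool" where
  "local_continuation f \<xi> e g \<longleftrightarrow>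
     0 < e \<and> g holomorphic_on ball \<xi> e \<and> (\<forall>z\<in>ball \<xi> e \<inter> ball 0 1. g z = f z)"

lemma ball_Int_unit_disc_nonempty:
  fixes \<xi> :: complex
  assumes "norm \<xi> = 1" "0 < m"
  shows "ball \<xi> m \<inter> ball 0 1 \<noteq> {}"
proof -
  define s where "s = min (m/2) (1/2)"
  have s: "0 < s" "s < m" "s \<le> 1/2" using assms by (auto simp: s_def)
  have "\<xi> - of_real (1 - s) * \<xi> = of_real s * \<xi>" by (simp add: algebra_simps)
  then have "dist \<xi> (of_real (1 - s) * \<xi>) = s"
    using s assms by (simp add: dist_norm norm_mult)
  moreover have "norm (of_real (1 - s) * \<xi>) = 1 - s"
    using s assms by (simp add: norm_mult del: of_real_diff)
  ultimately have "of_real (1 - s) * \<xi> \<in> ball \<xi> m \<inter> ball 0 1" using s by auto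
  then show ?thesis by blast
qed

lemma bdry_deriv_eq:
  assumes \<xi>: "norm \<xi> = 1" and g: "local_continuation f \<xi> e g"
  shows "bdry_deriv f \<xi> = deriv g \<xi>"
proof -
  have "\<exists>d. \<exists>e>0. \<exists>g. g holomorphic_on ball \<xi> e
      \<and> (\<forall>z\<in>ball \<xi> e \<inter> ball 0 1. g z = f z) \<and> d = deriv g \<xi>"
    using g unfolding local_continuation_def by blast
  from someI_ex[OF this, folded bdry_deriv_def] obtain e' g' where g': "local_continuation f \<xi> e' g'"
    and bd: "bdry_deriv f \<xi> = deriv g' \<xi>"
    unfolding local_continuation_def by blast
  define m where "m = min e e'"
  have m: "0 < m" using g g' by (simp add: m_def local_continuation_def)
  have "g' x = g x" if "x \<in> ball \<xi> m" for x
  proof (rule analytic_continuation_open[of "ball \<xi> m \<inter> ball 0 1" "ball \<xi> m" g' g])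
    show "ball \<xi> m \<inter> ball 0 1 \<noteq> {}" by (rule ball_Int_unit_disc_nonempty[OF \<xi> m])
    show "g' holomorphic_on ball \<xi> m"
      using g' holomorphic_on_subset[of g' "ball \<xi> e'"]
      by (simp add: local_continuation_def m_def subset_ball)
    show "g holomorphic_on ball \<xi> m"
      using g holomorphic_on_subset[of g "ball \<xi> e"]
      by (simp add: local_continuation_def m_def subset_ball)
    show "\<And>z. z \<in> ball \<xi> m \<inter> ball 0 1 \<Longrightarrow> g' z = g z"
      using g g' by (auto simp: local_continuation_def m_def)
  qed (use that in auto)
  then have "eventually (\<lambda>x. g' x = g x) (nhds \<xi>)"
    using m by (intro eventually_nhds_in_open[THEN eventually_mono, of "ball \<xi> m"]) auto
  then show ?thesis using bd by (simp add: deriv_cong_ev)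
qed

lemma norm_local_continuation_at_boundary:
  assumes \<xi>: "\<xi> \<in> sphere 0 1" "\<xi> \<notin> spec f" and le1: "\<forall>z\<in>ball 0 1. norm (f z) \<le> 1"
    and g: "local_continuation f \<xi> e g"
  shows "norm (g \<xi>) = 1"
proof -
  have "isCont g \<xi>"
  proof (rule continuous_on_interior)
    show "continuous_on (ball \<xi> e) g"
      using g holomorphic_on_imp_continuous_on by (simp add: local_continuation_def)
    show "\<xi> \<in> interior (ball \<xi> e)" using g by (simp add: local_continuation_def)
  qed
  then have "((\<lambda>z. norm (g z)) \<longlongrightarrow> norm (g \<xi>)) (at \<xi> within ball 0 1)"
    using continuous_at_imp_continuous_within[of \<xi> g "ball 0 1"]
    by (simp add: continuous_within tendsto_norm)
  moreover have "eventually (\<lambda>z. norm (g z) = norm (f z)) (at \<xi> within ball 0 1)"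
    using g unfolding eventually_at_filter local_continuation_def
    by (intro eventually_nhds_in_open[THEN eventually_mono, of "ball \<xi> e"]) auto
  ultimately have "((\<lambda>z. norm (f z)) \<longlongrightarrow> norm (g \<xi>)) (at \<xi> within ball 0 1)"
    by (rule Lim_transform_eventually)
  moreover have "\<not> trivial_limit (at \<xi> within ball 0 1)"
    using \<xi> by (simp add: trivial_limit_within islimpt_ball)
  ultimately show ?thesis
    using tendsto_unique tendsto_norm_1_off_spec[OF \<xi> le1] by blast
qed

lemma continuous_on_closure_norm_boundary_1:
  fixes G :: "'a::metric_space \<Rightarrow> 'b::real_normed_vector"
  assumes U: "open U" and contG: "continuous_on U G"
    and lim: "\<And>\<eta>. \<eta> \<in> frontier U \<Longrightarrow> ((\<lambda>z. norm (G z)) \<longlongrightarrow> 1) (at \<eta> within U)"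
  shows "continuous_on (closure U) (\<lambda>z. if z \<in> U then norm (G z) else 1)"
    (is "continuous_on _ ?h")
proof (unfold continuous_on_eq_continuous_within, intro ballI)
  fix x assume x: "x \<in> closure U"
  show "continuous (at x within closure U) ?h"
  proof (cases "x \<in> U")
    case True
    have "isCont G x" using contG True U continuous_on_eq_continuous_at by blast
    then have "isCont (\<lambda>z. norm (G z)) x" by (intro continuous_intros)
    moreover have ev: "eventually (\<lambda>z. norm (G z) = ?h z) (nhds x)"
      using True U by (intro eventually_nhds_in_open[THEN eventually_mono, of U]) auto
    ultimately have "isCont ?h x" using isCont_cong[OF ev] by blast
    then show ?thesis by (rule continuous_at_imp_continuous_within)
  next
    case False
    then have "x \<in> frontier U" using x closure_Un_frontier by blast
    then have "(?h \<longlongrightarrow> 1) (at x within U)"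
      by (rule Lim_transform_eventually[OF lim]) (auto simp: eventually_at_filter)
    moreover have "(?h \<longlongrightarrow> 1) (at x within frontier U)"
      using U by (intro Lim_transform_eventually[OF tendsto_const])
        (auto simp: eventually_at_filter frontier_def interior_open intro!: always_eventually)
    ultimately have "(?h \<longlongrightarrow> 1) (at x within (U \<union> frontier U))"
      by (simp add: Lim_within_Un)
    then show ?thesis using False closure_Un_frontier[of U] by (simp add: continuous_within)
  qed
qed

lemma norm_le_1_if_boundary_limits_1:
  assumes U: "open U" "connected U" "bounded U" and hol: "G holomorphic_on U"
    and lim: "\<And>\<eta>. \<eta> \<in> frontier U \<Longrightarrow> ((\<lambda>z. norm (G z)) \<longlongrightarrow> 1) (at \<eta> within U)"
    and z: "z \<in> U"
  shows "norm (G z) \<le> 1"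
proof (rule ccontr)
  assume z_gt: "\<not> norm (G z) \<le> 1"
  define h where "h = (\<lambda>z. if z \<in> U then norm (G z) else 1)"
  have "continuous_on (closure U) h"
    unfolding h_def using U(1) holomorphic_on_imp_continuous_on[OF hol] lim
    by (rule continuous_on_closure_norm_boundary_1)
  moreover have "compact (closure U)" using U(3) by (simp add: compact_eq_bounded_closed bounded_closure)
  ultimately obtain p where p: "p \<in> closure U" "\<And>y. y \<in> closure U \<Longrightarrow> h y \<le> h p"
    using continuous_attains_sup[of "closure U" h] z closure_subset by blast
  moreover have "h z \<le> h p" using p(2) z closure_subset by blast
  ultimately have "h p > 1" using z z_gt by (simp add: h_def)
  then have pU: "p \<in> U" by (auto simp: h_def split: if_splits)
  have "G constant_on U"
    by (rule maximum_modulus_principle[OF hol U(1,2) U(1) order_refl pU])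
      (use p(2) closure_subset pU in \<open>fastforce simp: h_def\<close>)
  then obtain k where k: "\<And>z. z \<in> U \<Longrightarrow> G z = k" unfolding constant_on_def by blast
  have "frontier U \<noteq> {}"
    using U(3) z frontier_eq_empty not_bounded_UNIV by blast
  then obtain \<eta> where \<eta>: "\<eta> \<in> frontier U" by blast
  then have "\<eta> islimpt U"
    using U(1) by (auto simp: frontier_def interior_open closure_def)
  then have "\<not> trivial_limit (at \<eta> within U)" by (simp add: trivial_limit_within)
  moreover have "((\<lambda>z. norm (G z)) \<longlongrightarrow> norm k) (at \<eta> within U)"
    by (rule Lim_transform_eventually[OF tendsto_const]) (auto simp: k eventually_at_filter)
  ultimately have "norm k = 1" by (rule tendsto_unique[OF _ _ lim[OF \<eta>]])
  then show False using \<open>h p > 1\<close> pU k[OF pU] by (simp add: h_def)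
qed

text \<open>The lower bound is the previous lemma applied to \<open>1/G\<close>.\<close>
lemma norm_eq_1_if_boundary_limits_1:
  assumes U: "open U" "connected U" "bounded U" and hol: "G holomorphic_on U"
    and nz: "\<forall>z\<in>U. G z \<noteq> 0"
    and lim: "\<And>\<eta>. \<eta> \<in> frontier U \<Longrightarrow> ((\<lambda>z. norm (G z)) \<longlongrightarrow> 1) (at \<eta> within U)"
    and z: "z \<in> U"
  shows "norm (G z) = 1"
proof -
  have "norm (inverse (G z)) \<le> 1"
  proof (rule norm_le_1_if_boundary_limits_1[OF U _ _ z])
    show "(\<lambda>z. inverse (G z)) holomorphic_on U" using hol nz by (intro holomorphic_intros) auto
    show "((\<lambda>z. norm (inverse (G z))) \<longlongrightarrow> 1) (at \<eta> within U)" if "\<eta> \<in> frontier U" for \<eta>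
      using tendsto_inverse[OF lim[OF that]] by (simp add: norm_inverse)
  qed
  then have "1 \<le> norm (G z)" using nz z by (simp add: norm_inverse inverse_le_1_iff)
  with norm_le_1_if_boundary_limits_1[OF U hol lim z] show ?thesis by simp
qed

lemma circlepath_minus_centre:
  "circlepath c \<rho> s - c = of_real \<rho> * exp (2 * of_real pi * \<i> * of_real s)"
  by (simp add: circlepath)

lemma circlepath_in_sphere:
  assumes "0 \<le> \<rho>"
  shows "circlepath c \<rho> s \<in> sphere c \<rho>"
proof -
  have "norm (circlepath c \<rho> s - c) = \<rho>"
    using assms by (simp add: circlepath_minus_centre norm_mult norm_exp_eq_Re)
  then show ?thesis by (simp add: dist_norm norm_minus_commute)
qed

lemma vector_derivative_circlepath_centre:
  "vector_derivative (circlepath c \<rho>) (at s) = 2 * of_real pi * \<i> * (circlepath c \<rho> s - c)"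
  unfolding vector_derivative_circlepath circlepath_minus_centre by simp

text \<open>The Schwarz integral \<open>(2\<pi>i)\<^sup>-\<^sup>1 \<ointegral> \<phi>(w) (w + z - 2c) / ((w - z)(w - c)) dw\<close> over the
  circle \<open>|w - c| = \<rho>\<close>, split into partial fractions.\<close>
definition schwarz_transform :: "(complex \<Rightarrow> real) \<Rightarrow> complex \<Rightarrow> real \<Rightarrow> complex \<Rightarrow> complex" where
  "schwarz_transform \<phi> c \<rho> z =
     (2 * contour_integral (circlepath c \<rho>) (\<lambda>w. of_real (\<phi> w) / (w - z))
      - contour_integral (circlepath c \<rho>) (\<lambda>w. of_real (\<phi> w) / (w - c))) / (2 * pi * \<i>)"

definition poisson_kernel :: "complex \<Rightarrow> real \<Rightarrow> complex \<Rightarrow> real \<Rightarrow> real" where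
  "poisson_kernel c \<rho> z s = (\<rho>^2 - (norm (z - c))^2) / (norm (circlepath c \<rho> s - z))^2"

lemma schwarz_transform_holomorphic:
  assumes \<rho>: "0 < \<rho>" and \<phi>: "continuous_on (sphere c \<rho>) \<phi>"
  shows "schwarz_transform \<phi> c \<rho> holomorphic_on ball c \<rho>"
proof -
  have "(\<lambda>z. contour_integral (circlepath c \<rho>) (\<lambda>w. of_real (\<phi> w) / (w - z)))
      holomorphic_on ball c \<rho>"
    unfolding holomorphic_on_def
  proof
    fix z assume z: "z \<in> ball c \<rho>"
    have int: "((\<lambda>u. of_real (\<phi> u) / (u - w)^1) has_contour_integral
        contour_integral (circlepath c \<rho>) (\<lambda>u. of_real (\<phi> u) / (u - w))) (circlepath c \<rho>)"
      if "w \<in> ball c \<rho>" for w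
    proof -
      have "(\<lambda>u. of_real (\<phi> u) / (u - w)) contour_integrable_on circlepath c \<rho>"
        using that \<phi> \<rho> by (intro contour_integrable_continuous_circlepath)
          (auto intro!: continuous_intros simp: dist_norm)
      then show ?thesis using has_contour_integral_integral by simp
    qed
    have "continuous_on (path_image (circlepath c \<rho>)) (\<lambda>w. complex_of_real (\<phi> w))"
      using \<phi> \<rho> by (auto intro: continuous_intros)
    from Cauchy_next_derivative_circlepath(2)[OF this int one_neq_zero z]
    show "(\<lambda>z. contour_integral (circlepath c \<rho>) (\<lambda>w. of_real (\<phi> w) / (w - z)))
        field_differentiable at z within ball c \<rho>"
      unfolding field_differentiable_def by (auto intro: has_field_derivative_at_within)
  qed
  then show ?thesis
    unfolding schwarz_transform_def[abs_def] by (intro holomorphic_intros) auto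
qed

lemma schwarz_transform_has_integral:
  assumes \<rho>: "0 < \<rho>" and \<phi>: "continuous_on (sphere c \<rho>) \<phi>" and z: "z \<in> ball c \<rho>"
  shows "((\<lambda>s. of_real (\<phi> (circlepath c \<rho> s)) *
      ((circlepath c \<rho> s + z - 2*c) / (circlepath c \<rho> s - z))) has_integral schwarz_transform \<phi> c \<rho> z) {0..1}"
proof -
  let ?g = "circlepath c \<rho>"
  have "(\<lambda>w. of_real (\<phi> w) / (w - a)) contour_integrable_on ?g" if "a \<in> ball c \<rho>" for a
    using that \<phi> \<rho> by (intro contour_integrable_continuous_circlepath)
      (auto intro!: continuous_intros simp: dist_norm)
  note h = this[OF z, THEN has_contour_integral_integral, unfolded has_contour_integral]
    this[of c, THEN has_contour_integral_integral, unfolded has_contour_integral]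
  show ?thesis
    unfolding schwarz_transform_def
  proof (rule has_integral_eq[OF _ has_integral_divide[OF has_integral_diff[OF
          has_integral_mult_right[OF h(1), of 2] h(2)]]])
    fix s
    define F where "F = complex_of_real (\<phi> (?g s))"
    define q where "q = 2 * of_real pi * \<i>"
    have q: "q \<noteq> 0" by (simp add: q_def)
    have gz: "?g s - z \<noteq> 0" and gc: "?g s - c \<noteq> 0"
      using circlepath_in_sphere[of \<rho> c s] z \<rho> by (auto simp: dist_commute)
    then have "F / (?g s - c) * (q * (?g s - c)) = F * q" by simp
    moreover have "(2 * (F / (?g s - z) * (q * (?g s - c))) - F * q) / q
        = 2 * (F / (?g s - z)) * (?g s - c) - F"
      using q gz by (simp add: field_simps)
    moreover have "2 * (F / (?g s - z)) * (?g s - c) - F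
        = (2 * F * (?g s - c) - F * (?g s - z)) / (?g s - z)"
      using \<open>?g s - z \<noteq> 0\<close> by (simp add: field_simps)
    ultimately have "(2 * (F / (?g s - z) * (q * (?g s - c))) - F / (?g s - c) * (q * (?g s - c))) / q
        = (2 * F * (?g s - c) - F * (?g s - z)) / (?g s - z)" by simp
    also have "2 * F * (?g s - c) - F * (?g s - z) = F * (?g s + z - 2 * c)"
      by (simp add: algebra_simps)
    finally have "(2 * (F / (?g s - z) * (q * (?g s - c))) - F / (?g s - c) * (q * (?g s - c))) / q
        = F * ((?g s + z - 2 * c) / (?g s - z))" by simp
    then show "(2 * (of_real (\<phi> (?g s)) / (?g s - z) * vector_derivative ?g (at s)) -
           of_real (\<phi> (?g s)) / (?g s - c) * vector_derivative ?g (at s)) / (2 * pi * \<i>) =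
          of_real (\<phi> (?g s)) * ((?g s + z - 2 * c) / (?g s - z))"
      unfolding vector_derivative_circlepath_centre F_def q_def by simp
  qed (use \<rho> in simp)
qed

lemma Re_divide_add_diff:
  fixes a b :: complex
  shows "Re ((a + b) / (a - b)) = ((norm a)^2 - (norm b)^2) / (norm (a - b))^2"
proof -
  have "Re ((a + b) / (a - b)) = (Re (a + b) * Re (a - b) + Im (a + b) * Im (a - b)) / (norm (a - b))^2"
    by (rule Re_divide')
  also have "Re (a + b) * Re (a - b) + Im (a + b) * Im (a - b) = (norm a)^2 - (norm b)^2"
    unfolding cmod_power2 by (simp add: algebra_simps power2_eq_square)
  finally show ?thesis .
qed

lemma Re_schwarz_kernel:
  assumes "0 \<le> \<rho>"
  shows "Re ((circlepath c \<rho> s + z - 2 * c) / (circlepath c \<rho> s - z)) = poisson_kernel c \<rho> z s"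
proof -
  have "(circlepath c \<rho> s + z - 2 * c) / (circlepath c \<rho> s - z) =
      ((circlepath c \<rho> s - c) + (z - c)) / ((circlepath c \<rho> s - c) - (z - c))"
    by (simp add: algebra_simps)
  also have "Re \<dots> = ((norm (circlepath c \<rho> s - c))^2 - (norm (z - c))^2)
      / (norm ((circlepath c \<rho> s - c) - (z - c)))^2"
    by (rule Re_divide_add_diff)
  also have "norm (circlepath c \<rho> s - c) = \<rho>"
    using circlepath_in_sphere[OF assms, of c s] by (simp add: dist_norm norm_minus_commute)
  finally show ?thesis by (simp add: poisson_kernel_def)
qed

lemma poisson_integral:
  assumes \<rho>: "0 < \<rho>" and \<phi>: "continuous_on (sphere c \<rho>) \<phi>" and z: "z \<in> ball c \<rho>"
  shows "((\<lambda>s. \<phi> (circlepath c \<rho> s) * poisson_kernel c \<rho> z s)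
    has_integral Re (schwarz_transform \<phi> c \<rho> z)) {0..1}"
proof -
  have "Re (of_real (\<phi> (circlepath c \<rho> s)) * ((circlepath c \<rho> s + z - 2*c) / (circlepath c \<rho> s - z)))
      = \<phi> (circlepath c \<rho> s) * poisson_kernel c \<rho> z s" for s
  proof -
    have "Re (of_real a * w) = a * Re w" for a w by simp
    then show ?thesis using Re_schwarz_kernel[of \<rho> c s z] \<rho> by (simp only: less_imp_le)
  qed
  then show ?thesis using has_integral_Re[OF schwarz_transform_has_integral[OF assms]] by simp
qed

lemma schwarz_transform_const_1:
  assumes \<rho>: "0 < \<rho>" and z: "z \<in> ball c \<rho>"
  shows "schwarz_transform (\<lambda>_. 1) c \<rho> z = 1"
proof -
  have "contour_integral (circlepath c \<rho>) (\<lambda>w. 1 / (w - a)) = 2 * of_real pi * \<i>"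
    if "a \<in> ball c \<rho>" for a
    using Cauchy_integral_circlepath_simple[of "\<lambda>_. 1" c \<rho> a] that
    by (auto intro!: contour_integral_unique simp: dist_norm norm_minus_commute)
  from this[OF z] this[of c] \<rho> show ?thesis by (simp add: schwarz_transform_def)
qed

lemma poisson_kernel_has_integral_1:
  assumes \<rho>: "0 < \<rho>" and z: "z \<in> ball c \<rho>"
  shows "(poisson_kernel c \<rho> z has_integral 1) {0..1}"
  using poisson_integral[OF \<rho> continuous_on_const z, of 1] schwarz_transform_const_1[OF assms]
  by simp

lemma poisson_kernel_nonneg:
  assumes "z \<in> ball c \<rho>"
  shows "0 \<le> poisson_kernel c \<rho> z s"
  using assms unfolding poisson_kernel_def
  by (intro divide_nonneg_nonneg) (auto simp: dist_norm norm_minus_commute power_mono)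

lemma poisson_kernel_le:
  assumes z: "z \<in> ball c \<rho>" and \<eta>: "\<eta> \<in> sphere c \<rho>" and \<delta>: "0 < \<delta>"
    and far: "\<delta> \<le> dist (circlepath c \<rho> s) \<eta>" and near: "dist z \<eta> < \<delta> / 2"
  shows "poisson_kernel c \<rho> z s \<le> 8 * \<rho> * dist z \<eta> / \<delta>^2"
proof -
  define t where "t = dist z \<eta>"
  have zc: "norm (z - c) < \<rho>" using z by (simp add: dist_norm norm_minus_commute)
  have "dist (circlepath c \<rho> s) z \<ge> dist (circlepath c \<rho> s) \<eta> - dist z \<eta>"
    using dist_triangle[of "circlepath c \<rho> s" \<eta> z] by (simp add: dist_commute)
  then have wz: "norm (circlepath c \<rho> s - z) \<ge> \<delta>/2" using far near by (simp add: dist_norm)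
  have "\<rho> - norm (z - c) \<le> t"
    using \<eta> norm_triangle_ineq2[of "\<eta> - c" "z - c"] by (simp add: t_def dist_norm norm_minus_commute)
  moreover have "0 \<le> \<rho> + norm (z - c)" using zc by (smt (verit) norm_ge_zero)
  ultimately have "(\<rho> - norm (z - c)) * (\<rho> + norm (z - c)) \<le> t * (2 * \<rho>)"
    using zc by (intro mult_mono) (auto simp: t_def)
  moreover have "\<rho>^2 - (norm (z - c))^2 = (\<rho> - norm (z - c)) * (\<rho> + norm (z - c))"
    by (simp add: power2_eq_square algebra_simps)
  ultimately have num: "\<rho>^2 - (norm (z - c))^2 \<le> t * (2 * \<rho>)" by simp
  have "poisson_kernel c \<rho> z s \<le> (\<rho>^2 - (norm (z - c))^2) / (\<delta>/2)^2"
    unfolding poisson_kernel_def using wz zc \<delta>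
    by (intro divide_left_mono power_mono) (auto intro!: mult_pos_pos simp: power_mono)
  also have "\<dots> \<le> (t * (2 * \<rho>)) / (\<delta>/2)^2"
    using num \<delta> by (intro divide_right_mono) auto
  finally show ?thesis by (simp add: t_def power_divide mult.commute mult.left_commute)
qed

lemma poisson_integrand_le:
  assumes \<rho>: "0 < \<rho>" and z: "z \<in> ball c \<rho>" and \<eta>: "\<eta> \<in> sphere c \<rho>"
    and \<delta>: "0 < \<delta>" "dist z \<eta> < \<delta> / 2" and \<epsilon>: "0 \<le> \<epsilon>"
    and M: "\<And>w. w \<in> sphere c \<rho> \<Longrightarrow> \<bar>\<phi> w\<bar> \<le> M"
    and near: "\<And>w. w \<in> sphere c \<rho> \<Longrightarrow> dist w \<eta> < \<delta> \<Longrightarrow> \<bar>\<phi> w - \<phi> \<eta>\<bar> < \<epsilon>"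
  shows "\<bar>(\<phi> (circlepath c \<rho> s) - \<phi> \<eta>) * poisson_kernel c \<rho> z s\<bar>
    \<le> \<epsilon> * poisson_kernel c \<rho> z s + 16 * M * \<rho> * dist z \<eta> / \<delta>^2"
proof -
  let ?w = "circlepath c \<rho> s" and ?P = "poisson_kernel c \<rho> z s"
  have w: "?w \<in> sphere c \<rho>" using \<rho> circlepath_in_sphere by simp
  have P: "0 \<le> ?P" by (rule poisson_kernel_nonneg[OF z])
  have M0: "0 \<le> M" using M[OF \<eta>] by linarith
  show ?thesis
  proof (cases "dist ?w \<eta> < \<delta>")
    case True
    then have "\<bar>\<phi> ?w - \<phi> \<eta>\<bar> * ?P \<le> \<epsilon> * ?P"
      using near[OF w] P by (intro mult_right_mono) auto
    moreover have "0 \<le> 16 * M * \<rho> * dist z \<eta> / \<delta>^2" using M0 \<rho> by simp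
    ultimately show ?thesis using P by (simp add: abs_mult)
  next
    case False
    have "\<bar>\<phi> ?w - \<phi> \<eta>\<bar> * ?P \<le> (2 * M) * (8 * \<rho> * dist z \<eta> / \<delta>^2)"
      using M[OF w] M[OF \<eta>] P M0 poisson_kernel_le[OF z \<eta> \<delta>(1) _ \<delta>(2), of s] False
      by (intro mult_mono) auto
    then have "\<bar>(\<phi> ?w - \<phi> \<eta>) * ?P\<bar> \<le> 16 * M * \<rho> * dist z \<eta> / \<delta>^2"
      using P by (simp add: abs_mult mult_ac)
    moreover have "0 \<le> \<epsilon> * ?P" using P \<epsilon> by simp
    ultimately show ?thesis by linarith
  qed
qed

lemma tendsto_Re_schwarz_transform:
  assumes \<rho>: "0 < \<rho>" and \<phi>: "continuous_on (sphere c \<rho>) \<phi>" and \<eta>: "\<eta> \<in> sphere c \<rho>"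
  shows "((\<lambda>z. Re (schwarz_transform \<phi> c \<rho> z)) \<longlongrightarrow> \<phi> \<eta>) (at \<eta> within ball c \<rho>)"
  unfolding Lim_within
proof (intro allI impI)
  fix \<epsilon> :: real assume \<epsilon>: "\<epsilon> > 0"
  obtain M where M: "\<And>w. w \<in> sphere c \<rho> \<Longrightarrow> \<bar>\<phi> w\<bar> \<le> M"
    using compact_imp_bounded[OF compact_continuous_image[OF \<phi> compact_sphere]]
    unfolding bounded_iff by (metis image_eqI real_norm_def)
  then have M0: "0 \<le> M" using \<eta> by force
  obtain \<delta> where \<delta>: "\<delta> > 0" "\<And>w. w \<in> sphere c \<rho> \<Longrightarrow> dist w \<eta> < \<delta> \<Longrightarrow> \<bar>\<phi> w - \<phi> \<eta>\<bar> < \<epsilon>/2"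
    using \<phi> \<eta> \<epsilon> unfolding continuous_on_iff dist_real_def by (meson half_gt_zero)
  define K where "K = 32 * M * \<rho> + 1"
  have K: "K > 0" using M0 \<rho> by (simp add: K_def add_nonneg_pos)
  show "\<exists>d>0. \<forall>z\<in>ball c \<rho>. 0 < dist z \<eta> \<and> dist z \<eta> < d \<longrightarrow>
      dist (Re (schwarz_transform \<phi> c \<rho> z)) (\<phi> \<eta>) < \<epsilon>"
  proof (intro exI conjI ballI impI)
    show "0 < min (\<delta>/2) (\<epsilon> * \<delta>^2 / K)" using \<delta> \<epsilon> K by simp
    fix z assume z: "z \<in> ball c \<rho>" and "0 < dist z \<eta> \<and> dist z \<eta> < min (\<delta>/2) (\<epsilon> * \<delta>^2 / K)"
    then have t: "dist z \<eta> < \<delta>/2" "dist z \<eta> < \<epsilon> * \<delta>^2 / K" by auto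
    define P where "P = poisson_kernel c \<rho> z"
    define C where "C = 16 * M * \<rho> * dist z \<eta> / \<delta>^2"
    have diff: "((\<lambda>s. (\<phi> (circlepath c \<rho> s) - \<phi> \<eta>) * P s)
        has_integral (Re (schwarz_transform \<phi> c \<rho> z) - \<phi> \<eta>)) {0..1}"
      using has_integral_diff[OF poisson_integral[OF \<rho> \<phi> z]
          has_integral_mult_right[OF poisson_kernel_has_integral_1[OF \<rho> z], of "\<phi> \<eta>"]]
      by (simp add: P_def algebra_simps)
    have bound: "((\<lambda>s. \<epsilon>/2 * P s + C) has_integral (\<epsilon>/2 + C)) {0..1}"
      using has_integral_add[OF has_integral_mult_right[OF poisson_kernel_has_integral_1[OF \<rho> z],
          of "\<epsilon>/2"] has_integral_const_real[of C 0 1]]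
      by (simp add: P_def)
    have pointwise: "\<bar>(\<phi> (circlepath c \<rho> s) - \<phi> \<eta>) * P s\<bar> \<le> \<epsilon>/2 * P s + C" for s
      unfolding P_def C_def using \<epsilon> M \<delta>(2)
      by (intro poisson_integrand_le[OF \<rho> z \<eta> \<delta>(1) t(1)]) auto
    have "Re (schwarz_transform \<phi> c \<rho> z) - \<phi> \<eta> \<le> \<epsilon>/2 + C"
      by (rule has_integral_le[OF diff bound]) (rule order_trans[OF abs_ge_self pointwise])
    moreover have "- (Re (schwarz_transform \<phi> c \<rho> z) - \<phi> \<eta>) \<le> \<epsilon>/2 + C"
      by (rule has_integral_le[OF has_integral_neg[OF diff] bound])
        (rule order_trans[OF abs_ge_minus_self pointwise])
    moreover have "C < \<epsilon>/2"
    proof -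
      have "16 * M * \<rho> * dist z \<eta> \<le> (K / 2) * dist z \<eta>" unfolding K_def by (simp add: field_simps)
      also have "\<dots> < \<epsilon>/2 * \<delta>^2" using t(2) K by (simp add: pos_less_divide_eq mult.commute)
      finally show ?thesis using \<delta> by (simp add: C_def pos_divide_less_eq)
    qed
    ultimately show "dist (Re (schwarz_transform \<phi> c \<rho> z)) (\<phi> \<eta>) < \<epsilon>"
      by (simp add: dist_real_def abs_if)
  qed
qed

definition circle_inversion :: "complex \<Rightarrow> complex" where
  "circle_inversion z = 1 / cnj z"

lemma circle_inversion_circle_inversion [simp]: "circle_inversion (circle_inversion z) = z"
  by (simp add: circle_inversion_def)

lemma norm_circle_inversion: "norm (circle_inversion z) = 1 / norm z"
  by (simp add: circle_inversion_def norm_divide)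

lemma circle_inversion_unit:
  assumes "norm z = 1"
  shows "circle_inversion z = z"
proof -
  have "z * cnj z = 1" using complex_norm_square[of z] assms by simp
  then show ?thesis
    using assms by (auto simp: circle_inversion_def divide_eq_eq mult.commute)
qed

lemma continuous_on_circle_inversion: "0 \<notin> A \<Longrightarrow> continuous_on A circle_inversion"
  unfolding circle_inversion_def by (intro continuous_intros) auto

lemma norm_circle_inversion_minus_sq:
  assumes "z \<noteq> 0" "(norm c)^2 = 1 + \<rho>^2"
  shows "(norm (circle_inversion z - c))^2 - \<rho>^2 = ((norm (z - c))^2 - \<rho>^2) / (norm z)^2"
proof -
  obtain x y where z: "z = Complex x y" by (cases z)
  obtain a d where c: "c = Complex a d" by (cases c)
  define s where "s = x^2 + y^2"
  have sz: "(norm z)^2 = s" by (simp add: z s_def cmod_power2)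
  have s: "s \<noteq> 0" using assms(1) sz by auto
  have cc: "a^2 + d^2 = 1 + \<rho>^2" using assms(2) c by (simp add: cmod_power2)
  have "circle_inversion z = Complex (x / s) (y / s)"
    using z by (simp add: circle_inversion_def complex_eq_iff Re_divide Im_divide s_def)
  then have "(norm (circle_inversion z - c))^2 = (x/s - a)^2 + (y/s - d)^2"
    by (simp add: c cmod_power2)
  also have "\<dots> = (x^2 + y^2)/s^2 - 2*(a*x+d*y)/s + (a^2 + d^2)"
    using s by (simp add: power2_eq_square field_simps)
  also have "(x^2 + y^2)/s^2 = 1/s" using s by (simp add: s_def power2_eq_square)
  finally have "(norm (circle_inversion z - c))^2 = 1/s - 2*(a*x+d*y)/s + (a^2 + d^2)" .
  moreover have "(norm (z - c))^2 = s - 2*(a*x+d*y) + (a^2 + d^2)"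
    unfolding cmod_power2 by (simp add: z c s_def power2_eq_square algebra_simps)
  ultimately show ?thesis unfolding sz cc using s by (simp add: field_simps)
qed

text \<open>The circle \<open>|z - c| = \<rho>\<close> with \<open>|c|\<^sup>2 = 1 + \<rho>\<^sup>2\<close> meets the unit circle orthogonally;
  the inversion maps it, and the disc it bounds, onto itself.\<close>
locale orthogonal_circle =
  fixes c :: complex and \<rho> :: real
  assumes radius_pos: "0 < \<rho>" and norm_centre_sq: "(norm c)^2 = 1 + \<rho>^2"
begin

lemma radius_less_norm_centre: "\<rho> < norm c"
proof -
  have "\<rho>^2 < (norm c)^2" using norm_centre_sq by simp
  then show ?thesis using radius_pos by (simp add: power_less_imp_less_base)
qed

lemma zero_notin_cball: "0 \<notin> cball c \<rho>"
  using radius_less_norm_centre by simp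

lemma circle_inversion_in_sphere: "z \<in> sphere c \<rho> \<Longrightarrow> circle_inversion z \<in> sphere c \<rho>"
proof -
  assume z: "z \<in> sphere c \<rho>"
  then have "z \<noteq> 0" using zero_notin_cball by auto
  moreover have "norm (z - c) = \<rho>" using z by (simp add: dist_norm norm_minus_commute)
  ultimately have "(norm (circle_inversion z - c))^2 = \<rho>^2"
    using norm_circle_inversion_minus_sq[OF _ norm_centre_sq, of z] by simp
  then have "norm (circle_inversion z - c) = \<rho>"
    using radius_pos by (simp add: power2_eq_iff_nonneg)
  then show ?thesis by (simp add: dist_norm norm_minus_commute)
qed

lemma circle_inversion_in_ball: "z \<in> ball c \<rho> \<Longrightarrow> circle_inversion z \<in> ball c \<rho>"
proof -
  assume z: "z \<in> ball c \<rho>"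
  then have "z \<noteq> 0" using zero_notin_cball by auto
  moreover have "(norm (z - c))^2 < \<rho>^2"
    using z radius_pos by (simp add: dist_norm norm_minus_commute power_strict_mono)
  ultimately have "((norm (z - c))^2 - \<rho>^2) / (norm z)^2 < 0"
    by (simp add: divide_neg_pos)
  then have "(norm (circle_inversion z - c))^2 < \<rho>^2"
    using norm_circle_inversion_minus_sq[OF \<open>z \<noteq> 0\<close> norm_centre_sq] by simp
  then show ?thesis
    using radius_pos by (simp add: dist_norm norm_minus_commute power_less_imp_less_base)
qed

text \<open>Schwarz reflection of a holomorphic function in the circle \<open>|z - c| = \<rho>\<close>; on the
  unit circle it takes the values \<open>-cnj (S z)\<close>, so it has the opposite real part there.\<close>
lemma holomorphic_on_reflection:
  assumes "S holomorphic_on ball c \<rho>"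
  shows "(\<lambda>z. - cnj (S (circle_inversion z))) holomorphic_on ball c \<rho>"
proof -
  define A where "A = cnj ` ball c \<rho>"
  have "cnj ` A = ball c \<rho>" by (simp add: A_def image_image)
  moreover have "open A"
    unfolding A_def image_cnj_conv_vimage_cnj by (intro open_vimage) (auto intro: continuous_intros)
  ultimately have "(cnj \<circ> S \<circ> cnj) holomorphic_on A"
    using assms by (intro holomorphic_on_compose_cnj_cnj) auto
  moreover have "(\<lambda>z. 1 / z) ` ball c \<rho> \<subseteq> A"
  proof
    fix x assume "x \<in> (\<lambda>z. 1 / z) ` ball c \<rho>"
    then obtain z where "z \<in> ball c \<rho>" "x = 1 / z" by blast
    then have "cnj x \<in> ball c \<rho>" using circle_inversion_in_ball by (simp add: circle_inversion_def)
    then show "x \<in> A" unfolding A_def by (metis complex_cnj_cnj image_eqI)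
  qed
  moreover have "(\<lambda>z. 1 / z) holomorphic_on ball c \<rho>"
    using zero_notin_cball by (intro holomorphic_intros) auto
  ultimately have "((cnj \<circ> S \<circ> cnj) \<circ> (\<lambda>z. 1 / z)) holomorphic_on ball c \<rho>"
    by (metis holomorphic_on_compose_gen)
  then have "(\<lambda>z. - ((cnj \<circ> S \<circ> cnj) \<circ> (\<lambda>z. 1 / z)) z) holomorphic_on ball c \<rho>"
    by (intro holomorphic_intros)
  then show ?thesis by (simp add: circle_inversion_def o_def)
qed

lemma filterlim_circle_inversion:
  assumes "\<eta> \<in> sphere c \<rho>"
  shows "filterlim circle_inversion (at (circle_inversion \<eta>) within ball c \<rho>) (at \<eta> within ball c \<rho>)"
proof (rule filterlim_at_withinI)
  have "isCont circle_inversion \<eta>"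
    using assms zero_notin_cball unfolding circle_inversion_def by (intro continuous_intros) auto
  then show "filterlim circle_inversion (nhds (circle_inversion \<eta>)) (at \<eta> within ball c \<rho>)"
    using continuous_at_imp_continuous_within by (auto simp: continuous_within)
  have "circle_inversion z \<in> ball c \<rho> - {circle_inversion \<eta>}" if "z \<noteq> \<eta>" "z \<in> ball c \<rho>" for z
    using that circle_inversion_in_ball by (metis Diff_iff circle_inversion_circle_inversion singletonD)
  then show "eventually (\<lambda>z. circle_inversion z \<in> ball c \<rho> - {circle_inversion \<eta>}) (at \<eta> within ball c \<rho>)"
    by (auto simp: eventually_at_filter intro!: always_eventually)
qed

end

lemma orthogonal_circle_near:
  assumes \<xi>: "norm \<xi> = 1" and \<rho>: "0 < \<rho>"
  shows "orthogonal_circle (of_real (sqrt (1 + \<rho>^2)) * \<xi>) \<rho>"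
    and "dist (of_real (sqrt (1 + \<rho>^2)) * \<xi>) \<xi> < \<rho>"
proof -
  show "orthogonal_circle (of_real (sqrt (1 + \<rho>^2)) * \<xi>) \<rho>"
    using \<xi> \<rho> by unfold_locales (simp_all add: norm_mult)
  have "of_real (sqrt (1 + \<rho>^2)) * \<xi> - \<xi> = of_real (sqrt (1 + \<rho>^2) - 1) * \<xi>"
    by (simp add: algebra_simps)
  then have "dist (of_real (sqrt (1 + \<rho>^2)) * \<xi>) \<xi> = sqrt (1 + \<rho>^2) - 1"
    using \<xi> by (simp add: dist_norm norm_mult del: of_real_diff)
  also have "sqrt (1 + \<rho>^2) < sqrt ((1 + \<rho>)^2)" using \<rho> by (simp add: power2_sum)
  then have "sqrt (1 + \<rho>^2) - 1 < \<rho>" using \<rho> by simp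
  finally show "dist (of_real (sqrt (1 + \<rho>^2)) * \<xi>) \<xi> < \<rho>" .
qed

context orthogonal_circle
begin

lemma ball_centre_Int_unit_disc_nonempty: "ball c \<rho> \<inter> ball 0 1 \<noteq> {}"
proof -
  define \<xi> where "\<xi> = c / of_real (norm c)"
  have "1^2 < (norm c)^2" using norm_centre_sq radius_pos by simp
  then have c: "norm c > 1" by (rule power_less_imp_less_base) simp
  then have c0: "c \<noteq> 0" by (intro notI) simp
  then have \<xi>: "norm \<xi> = 1" by (simp add: \<xi>_def norm_divide)
  have "of_real (norm c - 1) * \<xi> = of_real (norm c) * \<xi> - \<xi>" by (simp add: algebra_simps)
  also have "of_real (norm c) * \<xi> = c" using c0 by (simp add: \<xi>_def)
  finally have "dist c \<xi> = norm (of_real (norm c - 1) * \<xi>)" by (simp add: dist_norm)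
  also have "\<dots> = norm c - 1" using c \<xi> by (simp add: norm_mult del: of_real_diff)
  also have "\<dots> < \<rho>"
  proof -
    have "(norm c)^2 < (1 + \<rho>)^2" unfolding norm_centre_sq using radius_pos by (simp add: power2_sum)
    then have "norm c < 1 + \<rho>" by (rule power_less_imp_less_base) (use radius_pos in auto)
    then show ?thesis by simp
  qed
  finally have "dist c \<xi> < \<rho>" .
  have "ball \<xi> (\<rho> - dist c \<xi>) \<subseteq> ball c \<rho>"
  proof
    fix z assume "z \<in> ball \<xi> (\<rho> - dist c \<xi>)"
    then show "z \<in> ball c \<rho>" using dist_triangle[of c z \<xi>] by simp
  qed
  moreover have "ball \<xi> (\<rho> - dist c \<xi>) \<inter> ball 0 1 \<noteq> {}"
    using \<open>dist c \<xi> < \<rho>\<close> by (intro ball_Int_unit_disc_nonempty \<xi>) simp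
  ultimately show ?thesis by blast
qed

lemma Re_schwarz_transform_odd_eq_0:
  assumes \<phi>: "continuous_on (sphere c \<rho>) \<phi>"
    and odd: "\<And>w. w \<in> sphere c \<rho> \<Longrightarrow> \<phi> (circle_inversion w) = - \<phi> w"
    and z: "z \<in> ball c \<rho>" "norm z = 1"
  shows "Re (schwarz_transform \<phi> c \<rho> z) = 0"
proof -
  define S where "S = schwarz_transform \<phi> c \<rho>"
  define T where "T = (\<lambda>z. - cnj (S (circle_inversion z)))"
  have holS: "S holomorphic_on ball c \<rho>"
    unfolding S_def by (rule schwarz_transform_holomorphic[OF radius_pos \<phi>])
  have limS: "((\<lambda>z. Re (S z)) \<longlongrightarrow> \<phi> \<eta>) (at \<eta> within ball c \<rho>)" if "\<eta> \<in> sphere c \<rho>" for \<eta>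
    unfolding S_def by (rule tendsto_Re_schwarz_transform[OF radius_pos \<phi> that])
  have limT: "((\<lambda>z. Re (T z)) \<longlongrightarrow> \<phi> \<eta>) (at \<eta> within ball c \<rho>)" if \<eta>: "\<eta> \<in> sphere c \<rho>" for \<eta>
  proof -
    have "((\<lambda>z. Re (S (circle_inversion z))) \<longlongrightarrow> \<phi> (circle_inversion \<eta>)) (at \<eta> within ball c \<rho>)"
      using filterlim_compose[OF limS[OF circle_inversion_in_sphere[OF \<eta>]]
          filterlim_circle_inversion[OF \<eta>]] by (simp add: o_def)
    then show ?thesis using odd[OF \<eta>] by (simp add: T_def tendsto_minus_cancel_left)
  qed
  have "norm (exp (S z - T z)) = 1"
  proof (rule norm_eq_1_if_boundary_limits_1[of "ball c \<rho>" "\<lambda>z. exp (S z - T z)"])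
    show "(\<lambda>z. exp (S z - T z)) holomorphic_on ball c \<rho>"
      using holS holomorphic_on_reflection[OF holS, folded T_def] by (intro holomorphic_intros)
    show "((\<lambda>z. norm (exp (S z - T z))) \<longlongrightarrow> 1) (at \<eta> within ball c \<rho>)"
      if "\<eta> \<in> frontier (ball c \<rho>)" for \<eta>
    proof -
      have "\<eta> \<in> sphere c \<rho>" using that radius_pos by simp
      then have "((\<lambda>z. exp (Re (S z) - Re (T z))) \<longlongrightarrow> exp (\<phi> \<eta> - \<phi> \<eta>)) (at \<eta> within ball c \<rho>)"
        by (intro tendsto_intros limS limT)
      then show ?thesis by (simp add: norm_exp_eq_Re)
    qed
  qed (use z in auto)
  moreover have "T z = - cnj (S z)" using circle_inversion_unit[OF z(2)] by (simp add: T_def)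
  ultimately show ?thesis by (simp add: S_def norm_exp_eq_Re)
qed

end

definition minus_log_norm :: "(complex \<Rightarrow> complex) \<Rightarrow> complex \<Rightarrow> real" where
  "minus_log_norm f w = (if norm w < 1 then - ln (norm (f w)) else 0)"

definition odd_log_norm :: "(complex \<Rightarrow> complex) \<Rightarrow> complex \<Rightarrow> real" where
  "odd_log_norm f w = minus_log_norm f w - minus_log_norm f (circle_inversion w)"

lemma odd_log_norm_circle_inversion:
  "odd_log_norm f (circle_inversion w) = - odd_log_norm f w"
  by (simp add: odd_log_norm_def)

lemma odd_log_norm_unit: "norm w = 1 \<Longrightarrow> odd_log_norm f w = 0"
  by (simp add: odd_log_norm_def circle_inversion_unit)

lemma odd_log_norm_in_disc:
  assumes "norm w < 1" "w \<noteq> 0"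
  shows "odd_log_norm f w = - ln (norm (f w))"
  using assms by (simp add: odd_log_norm_def minus_log_norm_def norm_circle_inversion)

lemma isCont_minus_log_norm:
  assumes hol: "f holomorphic_on ball 0 1" and le1: "\<forall>z\<in>ball 0 1. norm (f z) \<le> 1"
    and nz: "w \<in> ball 0 1 \<Longrightarrow> f w \<noteq> 0" and nspec: "w \<in> sphere 0 1 \<Longrightarrow> w \<notin> spec f"
  shows "isCont (minus_log_norm f) w"
proof -
  consider "norm w < 1" | "norm w > 1" | "norm w = 1" by linarith
  then show ?thesis
  proof cases
    case 1
    then have w: "w \<in> ball 0 1" by simp
    have "isCont f w"
      using holomorphic_on_imp_continuous_on[OF hol] w continuous_on_interior by fastforce
    then have "isCont (\<lambda>y. - ln (norm (f y))) w"
      using nz[OF w] by (intro continuous_intros) auto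
    moreover have ev: "eventually (\<lambda>y. - ln (norm (f y)) = minus_log_norm f y) (nhds w)"
      using w by (intro eventually_nhds_in_open[THEN eventually_mono, of "ball 0 1"])
        (auto simp: minus_log_norm_def)
    ultimately show ?thesis using isCont_cong[OF ev] by blast
  next
    case 2
    have "eventually (\<lambda>y. 0 = minus_log_norm f y) (nhds w)"
      using 2 by (intro eventually_nhds_in_open[THEN eventually_mono, of "- cball 0 1"])
        (auto simp: minus_log_norm_def)
    then show ?thesis using isCont_cong[of "\<lambda>_. 0" "minus_log_norm f" w] by simp
  next
    case 3
    then have "((\<lambda>z. norm (f z)) \<longlongrightarrow> 1) (at w within ball 0 1)"
      using nspec le1 by (intro tendsto_norm_1_off_spec) auto
    then have "((\<lambda>z. - ln (norm (f z))) \<longlongrightarrow> - ln 1) (at w within ball 0 1)"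
      by (intro tendsto_intros) auto
    then have "((\<lambda>z. - ln (norm (f z))) \<longlongrightarrow> 0) (at w within ball 0 1)" by simp
    then have "(minus_log_norm f \<longlongrightarrow> 0) (at w within ball 0 1)"
      by (rule Lim_transform_eventually) (auto simp: minus_log_norm_def eventually_at_filter)
    moreover have "(minus_log_norm f \<longlongrightarrow> 0) (at w within - ball 0 1)"
      by (rule Lim_transform_eventually[OF tendsto_const])
        (auto simp: minus_log_norm_def eventually_at_filter)
    ultimately have "(minus_log_norm f \<longlongrightarrow> 0) (at w within (ball 0 1 \<union> - ball 0 1))"
      by (rule Lim_within_Un[THEN iffD2, OF conjI])
    moreover have "ball 0 1 \<union> - ball 0 1 = (UNIV :: complex set)" by auto
    ultimately show ?thesis using 3 by (simp add: isCont_def minus_log_norm_def)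
  qed
qed

locale reflection_data = orthogonal_circle +
  fixes f :: "complex \<Rightarrow> complex"
  assumes holomorphic: "f holomorphic_on ball 0 1"
    and norm_le_1: "\<forall>z\<in>ball 0 1. norm (f z) \<le> 1"
    and nonzero: "\<forall>z\<in>cball c \<rho> \<inter> ball 0 1. f z \<noteq> 0"
    and off_spec: "\<forall>z\<in>cball c \<rho> \<inter> sphere 0 1. z \<notin> spec f"
begin

abbreviation S where "S \<equiv> schwarz_transform (odd_log_norm f) c \<rho>"

lemma continuous_on_odd_log_norm: "continuous_on (sphere c \<rho>) (odd_log_norm f)"
proof -
  have cont: "continuous_on (sphere c \<rho>) (minus_log_norm f)"
    using holomorphic norm_le_1 nonzero off_spec
    by (intro continuous_at_imp_continuous_on ballI isCont_minus_log_norm) auto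
  moreover have "continuous_on (sphere c \<rho>) (\<lambda>w. minus_log_norm f (circle_inversion w))"
    using zero_notin_cball circle_inversion_in_sphere
    by (intro continuous_on_compose2[OF cont continuous_on_circle_inversion]) auto
  ultimately show ?thesis unfolding odd_log_norm_def[abs_def] by (intro continuous_intros)
qed

lemma holomorphic_S: "S holomorphic_on ball c \<rho>"
  by (rule schwarz_transform_holomorphic[OF radius_pos continuous_on_odd_log_norm])

lemma Re_S_unit_circle: "z \<in> ball c \<rho> \<Longrightarrow> norm z = 1 \<Longrightarrow> Re (S z) = 0"
  by (rule Re_schwarz_transform_odd_eq_0[OF continuous_on_odd_log_norm odd_log_norm_circle_inversion])

lemma tendsto_Re_S_frontier_unit_circle:
  assumes "\<eta> \<in> cball c \<rho>" "norm \<eta> = 1"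
  shows "((\<lambda>z. Re (S z)) \<longlongrightarrow> 0) (at \<eta> within ball c \<rho>)"
proof (cases "\<eta> \<in> sphere c \<rho>")
  case True
  then show ?thesis
    using tendsto_Re_schwarz_transform[OF radius_pos continuous_on_odd_log_norm True]
    by (simp add: odd_log_norm_unit[OF assms(2)])
next
  case False
  then have \<eta>: "\<eta> \<in> ball c \<rho>" using assms(1) by (simp add: less_le)
  then have "isCont S \<eta>"
    using holomorphic_on_imp_continuous_on[OF holomorphic_S] continuous_on_interior by fastforce
  then have "((\<lambda>z. Re (S z)) \<longlongrightarrow> Re (S \<eta>)) (at \<eta> within ball c \<rho>)"
    using continuous_at_imp_continuous_within[of \<eta> S "ball c \<rho>"]
    by (simp add: continuous_within tendsto_Re)
  then show ?thesis using Re_S_unit_circle[OF \<eta> assms(2)] by simp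
qed

lemma tendsto_norm_exp_S_mult_frontier:
  assumes \<eta>: "\<eta> \<in> frontier (ball c \<rho> \<inter> ball 0 1)"
  shows "((\<lambda>z. norm (exp (S z) * f z)) \<longlongrightarrow> 1) (at \<eta> within ball c \<rho> \<inter> ball 0 1)"
proof -
  define U where "U = ball c \<rho> \<inter> ball 0 1"
  have "\<eta> \<in> closure U" "\<eta> \<notin> U"
    using \<eta> by (auto simp: U_def frontier_def interior_open open_Int)
  moreover have "closure U \<subseteq> cball c \<rho> \<inter> cball 0 1"
    by (rule closure_minimal) (auto simp: U_def)
  ultimately have \<eta>c: "\<eta> \<in> cball c \<rho>" "norm \<eta> \<le> 1" by auto
  have "((\<lambda>z. exp (Re (S z)) * norm (f z)) \<longlongrightarrow> 1) (at \<eta> within U)"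
  proof (cases "norm \<eta> = 1")
    case True
    have "((\<lambda>z. norm (f z)) \<longlongrightarrow> 1) (at \<eta> within U)"
      using tendsto_norm_1_off_spec[of \<eta> f] off_spec \<eta>c True norm_le_1
      by (auto simp: U_def intro: tendsto_within_subset)
    moreover have "((\<lambda>z. Re (S z)) \<longlongrightarrow> 0) (at \<eta> within U)"
      using tendsto_Re_S_frontier_unit_circle[OF \<eta>c(1) True]
      by (rule tendsto_within_subset) (auto simp: U_def)
    ultimately show ?thesis using tendsto_mult[OF tendsto_exp] by fastforce
  next
    case False
    then have \<eta>1: "\<eta> \<in> ball 0 1" using \<eta>c by simp
    then have \<eta>s: "\<eta> \<in> sphere c \<rho>" using \<eta>c \<open>\<eta> \<notin> U\<close> by (auto simp: U_def less_le)
    have \<eta>0: "\<eta> \<noteq> 0" using zero_notin_cball \<eta>c by auto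
    have f\<eta>: "f \<eta> \<noteq> 0" using nonzero \<eta>c \<eta>1 by auto
    have "((\<lambda>z. Re (S z)) \<longlongrightarrow> - ln (norm (f \<eta>))) (at \<eta> within U)"
      using tendsto_Re_schwarz_transform[OF radius_pos continuous_on_odd_log_norm \<eta>s]
        odd_log_norm_in_disc[of \<eta> f] \<eta>1 \<eta>0
      by (auto simp: U_def intro: tendsto_within_subset)
    moreover have "isCont f \<eta>"
      using holomorphic_on_imp_continuous_on[OF holomorphic] \<eta>1 continuous_on_interior by fastforce
    then have "((\<lambda>z. norm (f z)) \<longlongrightarrow> norm (f \<eta>)) (at \<eta> within U)"
      using continuous_at_imp_continuous_within[of \<eta> f U] by (simp add: continuous_within tendsto_norm)
    ultimately have "((\<lambda>z. exp (Re (S z)) * norm (f z))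
        \<longlongrightarrow> exp (- ln (norm (f \<eta>))) * norm (f \<eta>)) (at \<eta> within U)"
      by (intro tendsto_mult tendsto_exp)
    then show ?thesis using f\<eta> by (simp add: exp_minus)
  qed
  then show ?thesis by (simp add: U_def norm_mult norm_exp_eq_Re)
qed

lemma exp_S_mult_constant: "\<exists>k. \<forall>z\<in>ball c \<rho> \<inter> ball 0 1. exp (S z) * f z = k"
proof -
  define U where "U = ball c \<rho> \<inter> ball 0 1"
  have U: "open U" "connected U" "bounded U"
    unfolding U_def by (auto intro!: convex_connected convex_Int bounded_Int)
  have hol: "(\<lambda>z. exp (S z) * f z) holomorphic_on U"
    using holomorphic_on_subset[OF holomorphic_S] holomorphic_on_subset[OF holomorphic]
    by (intro holomorphic_intros) (auto simp: U_def)
  have "norm (exp (S z) * f z) = 1" if "z \<in> U" for z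
    using U hol that nonzero tendsto_norm_exp_S_mult_frontier
    by (intro norm_eq_1_if_boundary_limits_1[of U "\<lambda>z. exp (S z) * f z"]) (auto simp: U_def)
  moreover obtain p where "p \<in> U" using ball_centre_Int_unit_disc_nonempty unfolding U_def by blast
  ultimately have "(\<lambda>z. exp (S z) * f z) constant_on U"
    by (intro maximum_modulus_principle[of _ U U p]) (use U hol in auto)
  then show ?thesis by (auto simp: constant_on_def U_def)
qed

lemma local_continuation_at:
  assumes "\<xi> \<in> ball c \<rho>"
  obtains e g where "local_continuation f \<xi> e g"
proof -
  obtain k where k: "\<And>z. z \<in> ball c \<rho> \<inter> ball 0 1 \<Longrightarrow> exp (S z) * f z = k"
    using exp_S_mult_constant by blast
  define e where "e = \<rho> - dist c \<xi>"
  have sub: "ball \<xi> e \<subseteq> ball c \<rho>"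
  proof
    fix z assume "z \<in> ball \<xi> e"
    then show "z \<in> ball c \<rho>" using dist_triangle[of c z \<xi>] by (simp add: e_def)
  qed
  have "local_continuation f \<xi> e (\<lambda>z. k * exp (- S z))"
    unfolding local_continuation_def
  proof (intro conjI ballI)
    show "0 < e" using assms by (simp add: e_def)
    show "(\<lambda>z. k * exp (- S z)) holomorphic_on ball \<xi> e"
      using holomorphic_on_subset[OF holomorphic_S sub] by (intro holomorphic_intros)
    fix z assume "z \<in> ball \<xi> e \<inter> ball 0 1"
    then have "exp (S z) * f z = k" using k sub by blast
    then show "k * exp (- S z) = f z" by (auto simp: exp_minus field_simps)
  qed
  then show thesis ..
qed

end

lemma local_continuation_exists:
  assumes hol: "f holomorphic_on ball 0 1" and le1: "\<forall>z\<in>ball 0 1. norm (f z) \<le> 1"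
    and \<xi>: "\<xi> \<in> sphere 0 1" "\<xi> \<notin> closure (spec f)"
  obtains e g where "local_continuation f \<xi> e g"
proof -
  obtain \<epsilon> where \<epsilon>: "\<epsilon> > 0" "\<forall>\<eta>\<in>spec f. \<not> dist \<eta> \<xi> < \<epsilon>"
    using \<xi>(2) unfolding closure_approachable by blast
  then have "\<xi> \<notin> spec f" by auto
  with tendsto_norm_1_off_spec[OF \<xi>(1) _ le1]
  have "eventually (\<lambda>z. 1/2 < norm (f z)) (at \<xi> within ball 0 1)"
    by (intro order_tendstoD) auto
  then obtain \<epsilon>' where \<epsilon>': "\<epsilon>' > 0"
    "\<And>x. x \<in> ball 0 1 \<Longrightarrow> x \<noteq> \<xi> \<Longrightarrow> dist x \<xi> < \<epsilon>' \<Longrightarrow> 1/2 < norm (f x)"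
    unfolding eventually_at by blast
  define \<rho> where "\<rho> = min \<epsilon> \<epsilon>' / 3"
  define c where "c = of_real (sqrt (1 + \<rho>^2)) * \<xi>"
  have \<rho>: "0 < \<rho>" using \<epsilon> \<epsilon>' by (simp add: \<rho>_def)
  have n\<xi>: "norm \<xi> = 1" using \<xi> by simp
  note orth = orthogonal_circle_near[OF n\<xi> \<rho>, folded c_def]
  have near: "dist z \<xi> < \<epsilon>" "dist z \<xi> < \<epsilon>'" if "z \<in> cball c \<rho>" for z
    using that orth(2) dist_triangle[of z \<xi> c] \<epsilon>(1) \<epsilon>'(1) by (auto simp: \<rho>_def dist_commute)
  interpret reflection_data c \<rho> f
  proof (rule reflection_data.intro[OF orth(1)], unfold_locales)
    show "f holomorphic_on ball 0 1" by (rule hol)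
    show "\<forall>z\<in>ball 0 1. norm (f z) \<le> 1" by (rule le1)
    show "\<forall>z\<in>cball c \<rho> \<inter> ball 0 1. f z \<noteq> 0"
    proof
      fix z assume z: "z \<in> cball c \<rho> \<inter> ball 0 1"
      then have "z \<noteq> \<xi>" using n\<xi> by auto
      then have "1/2 < norm (f z)" using z near(2) \<epsilon>'(2) by blast
      then show "f z \<noteq> 0" by auto
    qed
    show "\<forall>z\<in>cball c \<rho> \<inter> sphere 0 1. z \<notin> spec f"
      using near(1) \<epsilon>(2) by blast
  qed
  have "\<xi> \<in> ball c \<rho>" using orth(2) by (simp add: dist_commute)
  with local_continuation_at that show thesis by blast
qed

lemma Hinf_unit_norm_le_1:
  assumes "Hinf_unit f" "z \<in> ball 0 1"
  shows "norm (f z) \<le> 1"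
proof -
  obtain B where "\<forall>w\<in>f ` ball 0 1. norm w \<le> B"
    using assms(1) unfolding Hinf_unit_def bounded_iff by blast
  then have "bdd_above ((\<lambda>z. norm (f z)) ` ball 0 1)" by (auto intro!: bdd_aboveI[of _ B])
  from cSUP_upper[OF assms(2) this] show ?thesis using assms(1) by (simp add: Hinf_unit_def)
qed

lemma norm_deriv_radial_le:
  assumes hol: "f holomorphic_on ball 0 1" and le1: "\<forall>z\<in>ball 0 1. norm (f z) \<le> 1"
    and \<xi>: "\<xi> \<in> sphere 0 1" "\<xi> \<notin> spec f" and g: "local_continuation f \<xi> e g"
    and r: "0 \<le> r" "r < 1"
  shows "norm (deriv f (of_real r * \<xi>)) \<le> 4 * norm (deriv g \<xi>)"
proof -
  define z where "z = of_real r * \<xi>"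
  have z: "z \<in> ball 0 1" using \<xi> r by (simp add: z_def norm_mult)
  show ?thesis
  proof (cases "\<forall>w\<in>ball 0 1. norm (f w) < 1")
    case True
    have g\<xi>: "norm (g \<xi>) = 1" by (rule norm_local_continuation_at_boundary[OF \<xi> le1 g])
    have fz: "norm (f z) < 1" using True z by blast
    have "0 < e" "g holomorphic_on ball \<xi> e" "\<forall>z\<in>ball \<xi> e \<inter> ball 0 1. g z = f z"
      using g by (simp_all add: local_continuation_def)
    from radial_Julia_estimate[OF hol True _ this g\<xi> r] \<xi>
    have "(1 - r^2) * (norm (1 - cnj (g \<xi>) * f z))^2
        \<le> (1 - (norm (f z))^2) * norm (deriv g \<xi>) * (1 - r)^2"
      by (simp add: z_def)
    moreover have "(1 - norm (f z))^2 \<le> (norm (1 - cnj (g \<xi>) * f z))^2"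
      using norm_triangle_ineq2[of 1 "cnj (g \<xi>) * f z"] g\<xi> fz
      by (intro power_mono) (auto simp: norm_mult)
    moreover have "0 \<le> 1 - r^2" using r abs_square_less_1[of r] by simp
    ultimately have julia: "(1 - r^2) * (1 - norm (f z))^2
        \<le> (1 - (norm (f z))^2) * norm (deriv g \<xi>) * (1 - r)^2"
      by (meson mult_left_mono order_trans)
    have pick: "norm (deriv f z) * (1 - r^2) \<le> 1 - (norm (f z))^2"
      using Schwarz_Pick_deriv[OF hol True z] \<xi> r by (simp add: z_def norm_mult)
    from real_bound_from_Julia_estimate[OF _ _ fz r _ julia pick] show ?thesis
      by (simp add: z_def)
  next
    case False
    then obtain w where w: "w \<in> ball 0 1" "norm (f w) = 1" using le1 by force
    have "f constant_on ball 0 1"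
      by (rule maximum_modulus_principle[OF hol open_ball connected_ball open_ball order_refl w(1)])
        (use le1 w in auto)
    then obtain k where "\<And>w. w \<in> ball 0 1 \<Longrightarrow> f w = k" unfolding constant_on_def by blast
    then have "eventually (\<lambda>w. f w = k) (nhds z)"
      using z by (intro eventually_nhds_in_open[THEN eventually_mono, of "ball 0 1"]) auto
    then have "deriv f z = 0" by (simp add: deriv_cong_ev)
    then show ?thesis by (simp add: z_def)
  qed
qed

theorem lemma2p5:
  fixes b :: "complex \<Rightarrow> complex" and \<xi> :: complex and r :: real
  assumes "Hinf_unit b"
    and "\<xi> \<in> sphere 0 1 - closure (spec b)"
    and "1/2 < r" and "r < 1"
  shows "norm (deriv b (complex_of_real r * \<xi>)) \<le> 4 * norm (bdry_deriv b \<xi>)"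
proof -
  have hol: "b holomorphic_on ball 0 1" using assms(1) by (simp add: Hinf_unit_def)
  have le1: "\<forall>z\<in>ball 0 1. norm (b z) \<le> 1" using Hinf_unit_norm_le_1[OF assms(1)] by blast
  have \<xi>: "\<xi> \<in> sphere 0 1" "\<xi> \<notin> closure (spec b)" using assms(2) by auto
  obtain e g where g: "local_continuation b \<xi> e g"
    using local_continuation_exists[OF hol le1 \<xi>] .
  have "\<xi> \<notin> spec b" using \<xi>(2) closure_subset by blast
  moreover have "0 \<le> r" using assms(3) by simp \<comment> \<open>the only use of \<open>1/2 < r\<close>\<close>
  ultimately have "norm (deriv b (complex_of_real r * \<xi>)) \<le> 4 * norm (deriv g \<xi>)"
    using norm_deriv_radial_le[OF hol le1 \<xi>(1) _ g _ assms(4)] by blast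
  also have "deriv g \<xi> = bdry_deriv b \<xi>" using bdry_deriv_eq[OF _ g] \<xi>(1) by simp
  finally show ?thesis .
qed

end
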